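(* With notation as in the context, the subgroup $R[\{1,2,\dots,n+1\}]$ of $\mathcal{G}^{*J}_n$ equals the product of the iterated commutator subgroups $[[\dots[R_{i_1,j_1},R_{i_2,j_2}],\dots],R_{i_t,j_t}]$ over those sequences of pairs $1\leq i_s<j_s\leq n+1$ such that (1) $\{i_1,j_1,\dots,i_t,j_t\}=\{1,2,\dots,n+1\}$ and (2) $\{i_1,j_1,\dots,i_t,j_t\}\setminus\{i_p,j_p\}\neq\{1,2,\dots,n+1\}$ for every $1\leq p\leq t$.
   Context: $J$ is a set; $\mathcal{G}^{*J}_n$ is the free group on letters $x_{i,j}(\alpha)$, $1\leq i<j\leq n+1$, $\alpha\in J$ (the $n$-th group of a free product of copies of a simplicial free group $\mathcal{G}$ with $\mathcal{G}_n$ free on $x_{i,j}$). $R_{i,j}$ is the normal closure of $\{x_{i,j}(\alpha)\mid\alpha\in J\}$ in $\mathcal{G}^{*J}_n$. $R[\{1,\dots,n+1\}]$ is the product of all iterated commutator subgroups $[[\dots[R_{i_1,j_1},R_{i_2,j_2}],\dots],R_{i_t,j_t}]$, $t\geq1$, over all sequences of pairs with $\{1,\dots,n+1\}\subseteq\{i_1,j_1,\dots,i_t,j_t\}$ (for $t=1$ the subgroup is $R_{i_1,j_1}$). *)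

theory Defs
  imports "HOL-Algebra.Algebra"
begin

type_synonym 'g letter = "'g \<times> bool"   (* (generator, True) = x, (generator, False) = x^-1 *)

definition inv_letter :: "'g letter \<Rightarrow> 'g letter" where
  "inv_letter l = (fst l, \<not> snd l)"

fun reduced :: "'g letter list \<Rightarrow> bool" where
  "reduced [] = True"
| "reduced [x] = True"
| "reduced (x # y # ys) = (y \<noteq> inv_letter x \<and> reduced (y # ys))"

fun cancel_cons :: "'g letter \<Rightarrow> 'g letter list \<Rightarrow> 'g letter list" where
  "cancel_cons x [] = [x]"
| "cancel_cons x (y # ys) = (if y = inv_letter x then ys else x # y # ys)"

text \<open>The free group on the set of generators S: reduced words in S, multiplication is
  concatenation followed by free reduction.\<close>
definition free_group :: "'g set \<Rightarrow> 'g letter list monoid" where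
  "free_group S = \<lparr> carrier = {w. reduced w \<and> fst ` set w \<subseteq> S},
                    monoid.mult = (\<lambda>xs ys. foldr cancel_cons xs ys),
                    monoid.one = [] \<rparr>"

text \<open>Generators x_{i,j}(alpha), encoded as triples (i, j, alpha).\<close>
definition gens :: "nat \<Rightarrow> 'j set \<Rightarrow> (nat \<times> nat \<times> 'j) set" where
  "gens n J = {(i, j, a). 1 \<le> i \<and> i < j \<and> j \<le> n + 1 \<and> a \<in> J}"

definition Gn :: "nat \<Rightarrow> 'j set \<Rightarrow> (nat \<times> nat \<times> 'j) letter list monoid" where
  "Gn n J = free_group (gens n J)"

definition gen :: "nat \<Rightarrow> nat \<Rightarrow> 'j \<Rightarrow> (nat \<times> nat \<times> 'j) letter list" where
  "gen i j a = [((i, j, a), True)]"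

definition normal_closure :: "('a, 'b) monoid_scheme \<Rightarrow> 'a set \<Rightarrow> 'a set" where
  "normal_closure G H = generate G {g \<otimes>\<^bsub>G\<^esub> h \<otimes>\<^bsub>G\<^esub> inv\<^bsub>G\<^esub> g | g h. g \<in> carrier G \<and> h \<in> H}"

definition comm_subgroup :: "('a, 'b) monoid_scheme \<Rightarrow> 'a set \<Rightarrow> 'a set \<Rightarrow> 'a set" where
  "comm_subgroup G H K = generate G
     {h \<otimes>\<^bsub>G\<^esub> k \<otimes>\<^bsub>G\<^esub> inv\<^bsub>G\<^esub> h \<otimes>\<^bsub>G\<^esub> inv\<^bsub>G\<^esub> k | h k. h \<in> H \<and> k \<in> K}"

definition subgroup_product :: "('a, 'b) monoid_scheme \<Rightarrow> 'a set set \<Rightarrow> 'a set" where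
  "subgroup_product G \<H> = generate G (\<Union>\<H>)"

definition Rij :: "nat \<Rightarrow> 'j set \<Rightarrow> nat \<times> nat \<Rightarrow> (nat \<times> nat \<times> 'j) letter list set" where
  "Rij n J p = normal_closure (Gn n J) {gen (fst p) (snd p) a | a. a \<in> J}"

fun iter_comm :: "nat \<Rightarrow> 'j set \<Rightarrow> (nat \<times> nat) list \<Rightarrow> (nat \<times> nat \<times> 'j) letter list set" where
  "iter_comm n J [] = {[]}"
| "iter_comm n J (p # ps) = foldl (\<lambda>H q. comm_subgroup (Gn n J) H (Rij n J q)) (Rij n J p) ps"

definition valid_pair :: "nat \<Rightarrow> nat \<times> nat \<Rightarrow> bool" where
  "valid_pair n p \<longleftrightarrow> 1 \<le> fst p \<and> fst p < snd p \<and> snd p \<le> n + 1"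

definition indices :: "(nat \<times> nat) list \<Rightarrow> nat set" where
  "indices ps = (\<Union>p \<in> set ps. {fst p, snd p})"

definition R_full :: "nat \<Rightarrow> 'j set \<Rightarrow> (nat \<times> nat \<times> 'j) letter list set" where
  "R_full n J = subgroup_product (Gn n J)
     {iter_comm n J ps | ps. ps \<noteq> [] \<and> (\<forall>p \<in> set ps. valid_pair n p) \<and> {1..n+1} \<subseteq> indices ps}"

end

theory Submission imports Defs begin

text \<open>An iterated commutator of normal subgroups is contained in each of its factors, hence
  deleting a factor can only enlarge it. Starting from any sequence of pairs covering
  \<open>{1..n+1}\<close>, delete redundant pairs as long as the remaining ones still cover
  \<open>{1..n+1}\<close>; this ends in a sequence satisfying (1) and (2) whose iterated commutator
  contains the original one. So both families of subgroups have the same union.\<close>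

lemma inv_inv_letter [simp]: "inv_letter (inv_letter x) = x"
  by (simp add: inv_letter_def)

lemma fst_inv_letter [simp]: "fst (inv_letter x) = fst x"
  by (simp add: inv_letter_def)

lemma reduced_Cons_tl: "reduced (y # ys) \<Longrightarrow> reduced ys"
  by (cases ys) auto

lemma reduced_snoc2: "reduced (zs @ [a]) \<Longrightarrow> b \<noteq> inv_letter a \<Longrightarrow> reduced (zs @ [a, b])"
  by (induction zs rule: reduced.induct) auto

lemma reduced_cancel_cons: "reduced ys \<Longrightarrow> reduced (cancel_cons x ys)"
  by (cases ys) (auto dest: reduced_Cons_tl)

lemma reduced_foldr_cancel_cons: "reduced ys \<Longrightarrow> reduced (foldr cancel_cons xs ys)"
  by (induction xs) (auto intro: reduced_cancel_cons)

lemma set_cancel_cons: "set (cancel_cons x ys) \<subseteq> insert x (set ys)"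
  by (cases ys) auto

lemma set_foldr_cancel_cons: "set (foldr cancel_cons xs ys) \<subseteq> set xs \<union> set ys"
  by (induction xs) (use set_cancel_cons in fastforce)+

lemma cancel_cons_inv_letter:
  assumes "reduced ys"
  shows "cancel_cons x (cancel_cons (inv_letter x) ys) = ys"
proof (cases ys)
  case (Cons y ys')
  then show ?thesis
    using assms by (cases "y = x"; cases ys') (auto simp: inv_letter_def)
qed simp

lemma foldr_cancel_cons_cancel_cons:
  assumes "reduced ys" "reduced zs"
  shows "foldr cancel_cons (cancel_cons x ys) zs = cancel_cons x (foldr cancel_cons ys zs)"
proof (cases ys)
  case (Cons y ys')
  have "reduced (foldr cancel_cons ys' zs)"
    using assms(2) by (rule reduced_foldr_cancel_cons)
  then show ?thesis
    using Cons cancel_cons_inv_letter[of "foldr cancel_cons ys' zs" x] by auto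
qed simp

lemma foldr_cancel_cons_assoc:
  assumes "reduced ys" "reduced zs"
  shows "foldr cancel_cons (foldr cancel_cons xs ys) zs
       = foldr cancel_cons xs (foldr cancel_cons ys zs)"
  using assms
  by (induction xs) (simp_all add: foldr_cancel_cons_cancel_cons reduced_foldr_cancel_cons)

lemma foldr_cancel_cons_inverse: "foldr cancel_cons (rev (map inv_letter w)) w = []"
  by (induction w) (simp_all add: inv_letter_def)

lemma reduced_inverse: "reduced w \<Longrightarrow> reduced (rev (map inv_letter w))"
proof (induction w rule: reduced.induct)
  case (3 x y ys)
  have "reduced (rev (map inv_letter ys) @ [inv_letter y])"
    using 3 by simp
  moreover have "inv_letter x \<noteq> inv_letter (inv_letter y)"
    using 3(2) by (auto simp: inv_letter_def)
  ultimately show ?case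
    using reduced_snoc2 by fastforce
qed auto

lemma free_group_simps:
  "carrier (free_group S) = {w. reduced w \<and> fst ` set w \<subseteq> S}"
  "x \<otimes>\<^bsub>free_group S\<^esub> y = foldr cancel_cons x y"
  "\<one>\<^bsub>free_group S\<^esub> = []"
  by (simp_all add: free_group_def)

lemma group_free_group: "group (free_group S)"
proof (rule groupI)
  fix x y assume x: "x \<in> carrier (free_group S)" and y: "y \<in> carrier (free_group S)"
  then have "reduced (foldr cancel_cons x y)"
    by (simp add: free_group_simps reduced_foldr_cancel_cons)
  moreover have "fst ` set (foldr cancel_cons x y) \<subseteq> S"
    using x y set_foldr_cancel_cons[of x y] unfolding free_group_simps by blast
  ultimately show "x \<otimes>\<^bsub>free_group S\<^esub> y \<in> carrier (free_group S)"
    by (simp add: free_group_simps)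
next
  fix x assume "x \<in> carrier (free_group S)"
  then have "rev (map inv_letter x) \<in> carrier (free_group S)"
    by (auto simp: free_group_simps reduced_inverse)
  moreover have "rev (map inv_letter x) \<otimes>\<^bsub>free_group S\<^esub> x = \<one>\<^bsub>free_group S\<^esub>"
    by (simp add: free_group_simps foldr_cancel_cons_inverse)
  ultimately show "\<exists>y\<in>carrier (free_group S). y \<otimes>\<^bsub>free_group S\<^esub> x = \<one>\<^bsub>free_group S\<^esub>"
    by blast
qed (auto simp: free_group_simps foldr_cancel_cons_assoc)

lemma group_Gn: "group (Gn n J)"
  unfolding Gn_def by (rule group_free_group)

context group begin

lemma inv_mult_cancel_left: "x \<in> carrier G \<Longrightarrow> y \<in> carrier G \<Longrightarrow> inv x \<otimes> (x \<otimes> y) = y"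
  by (simp add: m_assoc [symmetric])

lemma normal_closure_normal:
  assumes "A \<subseteq> carrier G"
  shows "normal_closure G A \<lhd> G"
  unfolding normal_closure_def
proof (rule normal_generateI)
  fix x g assume x: "x \<in> {a \<otimes> h \<otimes> inv a |a h. a \<in> carrier G \<and> h \<in> A}" and g: "g \<in> carrier G"
  then obtain a h where a: "a \<in> carrier G" and h: "h \<in> A" and x_eq: "x = a \<otimes> h \<otimes> inv a"
    by blast
  have "g \<otimes> x \<otimes> inv g = (g \<otimes> a) \<otimes> h \<otimes> inv (g \<otimes> a)"
    using a g h assms by (simp add: x_eq inv_mult_group m_assoc subsetD)
  then show "g \<otimes> x \<otimes> inv g \<in> {a \<otimes> h \<otimes> inv a |a h. a \<in> carrier G \<and> h \<in> A}"
    using a g h by blast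
qed (use assms in auto)

lemma comm_subgroup_normal:
  assumes H: "H \<lhd> G" and K: "K \<lhd> G"
  shows "comm_subgroup G H K \<lhd> G"
  unfolding comm_subgroup_def
proof (rule normal_generateI)
  have HK: "H \<subseteq> carrier G" "K \<subseteq> carrier G"
    using H K normal_imp_subgroup subgroup.subset by blast+
  then show "{h \<otimes> k \<otimes> inv h \<otimes> inv k |h k. h \<in> H \<and> k \<in> K} \<subseteq> carrier G"
    by (auto intro!: m_closed inv_closed)
  fix x g assume x: "x \<in> {h \<otimes> k \<otimes> inv h \<otimes> inv k |h k. h \<in> H \<and> k \<in> K}" and g: "g \<in> carrier G"
  then obtain h k where h: "h \<in> H" and k: "k \<in> K" and x_eq: "x = h \<otimes> k \<otimes> inv h \<otimes> inv k"
    by blast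
  have "g \<otimes> x \<otimes> inv g = (g \<otimes> h \<otimes> inv g) \<otimes> (g \<otimes> k \<otimes> inv g)
          \<otimes> inv (g \<otimes> h \<otimes> inv g) \<otimes> inv (g \<otimes> k \<otimes> inv g)"
    using g h k HK by (simp add: x_eq inv_mult_group m_assoc inv_mult_cancel_left subsetD)
  moreover have "g \<otimes> h \<otimes> inv g \<in> H" "g \<otimes> k \<otimes> inv g \<in> K"
    using H K h k g normal_inv_iff by blast+
  ultimately show "g \<otimes> x \<otimes> inv g \<in> {h \<otimes> k \<otimes> inv h \<otimes> inv k |h k. h \<in> H \<and> k \<in> K}"
    by blast
qed

lemma comm_subgroup_subset_left:
  assumes H: "H \<lhd> G" and K: "K \<subseteq> carrier G"
  shows "comm_subgroup G H K \<subseteq> H"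
  unfolding comm_subgroup_def
proof (rule generate_subgroup_incl)
  interpret H: subgroup H G
    using H by (rule normal_imp_subgroup)
  show "{h \<otimes> k \<otimes> inv h \<otimes> inv k |h k. h \<in> H \<and> k \<in> K} \<subseteq> H"
  proof clarify
    fix h k assume h: "h \<in> H" and k: "k \<in> K"
    have "k \<otimes> inv h \<otimes> inv k \<in> H"
      using H h k K normal_inv_iff by blast
    then have "h \<otimes> (k \<otimes> inv h \<otimes> inv k) \<in> H"
      using h by blast
    then show "h \<otimes> k \<otimes> inv h \<otimes> inv k \<in> H"
      using h k K by (simp add: m_assoc subsetD)
  qed
qed (rule normal_imp_subgroup[OF H])

lemma comm_subgroup_subset_right:
  assumes H: "H \<subseteq> carrier G" and K: "K \<lhd> G"
  shows "comm_subgroup G H K \<subseteq> K"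
  unfolding comm_subgroup_def
proof (rule generate_subgroup_incl)
  interpret K: subgroup K G
    using K by (rule normal_imp_subgroup)
  show "{h \<otimes> k \<otimes> inv h \<otimes> inv k |h k. h \<in> H \<and> k \<in> K} \<subseteq> K"
  proof clarify
    fix h k assume h: "h \<in> H" and k: "k \<in> K"
    have "h \<otimes> k \<otimes> inv h \<in> K"
      using K k h H normal_inv_iff by blast
    then show "h \<otimes> k \<otimes> inv h \<otimes> inv k \<in> K"
      using k by blast
  qed
qed (rule normal_imp_subgroup[OF K])

lemma comm_subgroup_mono_left: "H \<subseteq> H' \<Longrightarrow> comm_subgroup G H K \<subseteq> comm_subgroup G H' K"
  unfolding comm_subgroup_def by (rule mono_generate) blast

end

definition comm_fold :: "('a, 'b) monoid_scheme \<Rightarrow> ('c \<Rightarrow> 'a set) \<Rightarrow> 'a set \<Rightarrow> 'c list \<Rightarrow> 'a set"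
  where "comm_fold G R H qs = foldl (\<lambda>H q. comm_subgroup G H (R q)) H qs"

lemma comm_fold_simps [simp]:
  "comm_fold G R H [] = H"
  "comm_fold G R H (q # qs) = comm_fold G R (comm_subgroup G H (R q)) qs"
  by (simp_all add: comm_fold_def)

context group begin

lemma comm_fold_mono:
  "H \<subseteq> H' \<Longrightarrow> comm_fold G R H qs \<subseteq> comm_fold G R H' qs"
  by (induction qs arbitrary: H H') (simp_all add: comm_subgroup_mono_left)

lemma comm_fold_delete:
  assumes "H \<lhd> G" "\<forall>q\<in>set qs. R q \<lhd> G" "k < length qs"
  shows "comm_fold G R H qs \<subseteq> comm_fold G R H (take k qs @ drop (Suc k) qs)"
  using assms
proof (induction qs arbitrary: H k)
  case (Cons q qs)
  have Rq: "R q \<lhd> G"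
    using Cons.prems(2) by simp
  show ?case
  proof (cases k)
    case 0
    have "comm_subgroup G H (R q) \<subseteq> H"
      using comm_subgroup_subset_left[OF Cons.prems(1)] Rq
      by (simp add: normal_imp_subgroup subgroup.subset)
    then show ?thesis
      using 0 by (simp add: comm_fold_mono)
  next
    case (Suc k')
    then show ?thesis
      using Cons.IH[of "comm_subgroup G H (R q)" k'] Cons.prems comm_subgroup_normal[OF _ Rq]
      by simp
  qed
qed simp

end

lemma Rij_normal: "valid_pair n p \<Longrightarrow> Rij n J p \<lhd> Gn n J"
  unfolding Rij_def
  by (rule group.normal_closure_normal[OF group_Gn])
     (auto simp: Gn_def free_group_simps gen_def gens_def valid_pair_def)

lemma iter_comm_Cons: "iter_comm n J (p # qs) = comm_fold (Gn n J) (Rij n J) (Rij n J p) qs"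
  by (simp add: comm_fold_def)

lemma iter_comm_delete:
  assumes "\<forall>p\<in>set ps. valid_pair n p" "k < length ps" "take k ps @ drop (Suc k) ps \<noteq> []"
  shows "iter_comm n J ps \<subseteq> iter_comm n J (take k ps @ drop (Suc k) ps)"
proof -
  interpret G: group "Gn n J"
    by (rule group_Gn)
  obtain p qs where ps: "ps = p # qs"
    using assms(2) by (cases ps) auto
  have normal: "\<forall>q\<in>set ps. Rij n J q \<lhd> Gn n J"
    using assms(1) by (simp add: Rij_normal)
  show ?thesis
  proof (cases k)
    case 0
    then obtain q qs' where qs: "qs = q # qs'"
      using assms(3) ps by (cases qs) auto
    have "comm_subgroup (Gn n J) (Rij n J p) (Rij n J q) \<subseteq> Rij n J q"
      using normal ps qs
      by (intro G.comm_subgroup_subset_right) (simp_all add: normal_imp_subgroup subgroup.subset)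
    then show ?thesis
      using 0 ps qs G.comm_fold_mono by (simp del: iter_comm.simps add: iter_comm_Cons)
  next
    case (Suc k')
    then show ?thesis
      using G.comm_fold_delete[of "Rij n J p" qs "Rij n J" k'] normal ps assms(2)
      by (simp del: iter_comm.simps add: iter_comm_Cons)
  qed
qed

lemma indices_subset_valid: "\<forall>p\<in>set ps. valid_pair n p \<Longrightarrow> indices ps \<subseteq> {1..n+1}"
  by (auto simp: indices_def valid_pair_def)

lemma covering_nonempty: "indices ps = {1..n+1} \<Longrightarrow> ps \<noteq> []"
  by (auto simp: indices_def)

lemma set_delete_subset: "set (take k ps @ drop (Suc k) ps) \<subseteq> set ps"
  by (auto dest: in_set_takeD in_set_dropD)

lemma iter_comm_subset_minimal_covering:
  assumes "\<forall>p\<in>set ps. valid_pair n p" "{1..n+1} \<subseteq> indices ps"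
  shows "\<exists>ms. ms \<noteq> [] \<and> (\<forall>p\<in>set ms. valid_pair n p) \<and> indices ms = {1..n+1}
           \<and> (\<forall>k < length ms. indices (take k ms @ drop (Suc k) ms) \<noteq> {1..n+1})
           \<and> iter_comm n J ps \<subseteq> iter_comm n J ms"
  using assms
proof (induction "length ps" arbitrary: ps rule: less_induct)
  case less
  have covers: "indices ps = {1..n+1}"
    using indices_subset_valid[OF less.prems(1)] less.prems(2) by (rule subset_antisym)
  then have nonempty: "ps \<noteq> []"
    by (rule covering_nonempty)
  show ?case
  proof (cases "\<forall>k < length ps. indices (take k ps @ drop (Suc k) ps) \<noteq> {1..n+1}")
    case True
    then show ?thesis
      using less.prems covers nonempty by blast
  next
    case False
    then obtain k where k: "k < length ps"
      and covers': "indices (take k ps @ drop (Suc k) ps) = {1..n+1}"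
      by blast
    let ?qs = "take k ps @ drop (Suc k) ps"
    have "?qs \<noteq> []"
      using covers' by (rule covering_nonempty)
    then have delete: "iter_comm n J ps \<subseteq> iter_comm n J ?qs"
      by (rule iter_comm_delete[OF less.prems(1) k])
    have "length ?qs < length ps"
      using k by simp
    moreover have "\<forall>p\<in>set ?qs. valid_pair n p"
      using less.prems(1) set_delete_subset[of k ps] by blast
    ultimately have "\<exists>ms. ms \<noteq> [] \<and> (\<forall>p\<in>set ms. valid_pair n p) \<and> indices ms = {1..n+1}
           \<and> (\<forall>k < length ms. indices (take k ms @ drop (Suc k) ms) \<noteq> {1..n+1})
           \<and> iter_comm n J ?qs \<subseteq> iter_comm n J ms"
      using covers' by (intro less.hyps) simp_all
    with delete show ?thesis
      by (meson order_trans)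
  qed
qed

theorem lemma3p6:
  fixes n :: nat and J :: "'j set"
  shows "R_full n J = subgroup_product (Gn n J)
     {iter_comm n J ps | ps. ps \<noteq> [] \<and> (\<forall>p \<in> set ps. valid_pair n p)
        \<and> indices ps = {1..n+1}
        \<and> (\<forall>k < length ps. indices (take k ps @ drop (Suc k) ps) \<noteq> {1..n+1})}"
  (is "_ = subgroup_product _ ?Minimal")
proof -
  let ?Covering = "{iter_comm n J ps | ps. ps \<noteq> [] \<and> (\<forall>p \<in> set ps. valid_pair n p)
                      \<and> {1..n+1} \<subseteq> indices ps}"
  have "\<Union>?Covering \<subseteq> \<Union>?Minimal"
  proof
    fix x assume "x \<in> \<Union>?Covering"
    then obtain ps where x: "x \<in> iter_comm n J ps"
      and ps: "\<forall>p\<in>set ps. valid_pair n p" "{1..n+1} \<subseteq> indices ps"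
      by blast
    obtain ms where "iter_comm n J ms \<in> ?Minimal" and "iter_comm n J ps \<subseteq> iter_comm n J ms"
      using iter_comm_subset_minimal_covering[OF ps, of J] by blast
    then show "x \<in> \<Union>?Minimal"
      using x by blast
  qed
  moreover have "\<Union>?Minimal \<subseteq> \<Union>?Covering"
    by (rule Union_mono) auto
  ultimately have "\<Union>?Covering = \<Union>?Minimal"
    by (rule subset_antisym)
  then show ?thesis
    unfolding R_full_def subgroup_product_def by (rule arg_cong)
qed

end
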